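(* Let $M_1,\dots,M_N$ be matrices in $\mathbb C^{d\times nd}$. Let $\lambda_1,\dots,\lambda_{nd}$ be the eigenvalues of $\sum_{j}M_j^\ast M_j$ and $\nu_1,\dots,\nu_d$ the eigenvalues of $\sum_j M_jM_j^\ast$. Then $\sum_{i=1}^{nd}\lambda_i=\sum_{j=1}^d\nu_j$. Furthermore, if $\max_i\lambda_i\le\frac1d\sum_{j=1}^d\nu_j$, then for every integer $p\ge2$, \[ \Big\|\Big(\sum_j M_jM_j^\ast\Big)^{1/2}\Big\|_{S_{2p}}^{2p}\ge\Big\|\Big(\sum_j M_j^\ast M_j\Big)^{1/2}\Big\|_{S_{2p}}^{2p}. \]
   Context: $A^\ast$ is the conjugate transpose. For a matrix $A$, the Schatten $p$-norm is $\|A\|_{S_p}=\big(\mathrm{tr}\,(A^\ast A)^{p/2}\big)^{1/p}$. *)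

theory Defs
  imports "Jordan_Normal_Form.Schur_Decomposition" "Jordan_Normal_Form.Jordan_Normal_Form"
begin

definition mat_sum :: "nat \<Rightarrow> (nat \<Rightarrow> 'a::comm_monoid_add mat) \<Rightarrow> nat \<Rightarrow> 'a mat" where
  "mat_sum k f N = foldr (\<lambda>j acc. f j + acc) [0..<N] (0\<^sub>m k k)"

definition mtrace :: "'a::comm_monoid_add mat \<Rightarrow> 'a" where
  "mtrace A = (\<Sum>i<dim_row A. A $$ (i,i))"

(* eigenvalues with algebraic multiplicity *)
definition eigvals :: "complex mat \<Rightarrow> complex multiset" where
  "eigvals A = proots (char_poly A)"

definition real_diag :: "nat \<Rightarrow> (nat \<Rightarrow> real) \<Rightarrow> complex mat" where
  "real_diag n r = mat n n (\<lambda>(i,j). if i = j then complex_of_real (r i) else 0)"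

definition unitary :: "nat \<Rightarrow> complex mat \<Rightarrow> bool" where
  "unitary n U \<longleftrightarrow> U \<in> carrier_mat n n \<and> U * mat_adjoint U = 1\<^sub>m n \<and> mat_adjoint U * U = 1\<^sub>m n"

(* H^s for a positive semidefinite matrix H = U diag(r) U^*, defined by functional calculus *)
definition psd_pow :: "real \<Rightarrow> complex mat \<Rightarrow> complex mat" where
  "psd_pow s H = (SOME R. \<exists>n U r. H \<in> carrier_mat n n \<and> unitary n U \<and> (\<forall>i<n. r i \<ge> 0) \<and>
       H = U * real_diag n r * mat_adjoint U \<and>
       R = U * real_diag n (\<lambda>i. r i powr s) * mat_adjoint U)"

definition schatten :: "real \<Rightarrow> complex mat \<Rightarrow> real" where
  "schatten q A = (Re (mtrace (psd_pow (q / 2) (mat_adjoint A * A)))) powr (1 / q)"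

end

theory Submission
  imports Defs "Jordan_Normal_Form.Spectral_Radius"
begin

(* A = sum_j M_j^* M_j and B = sum_j M_j M_j^* are sums of Gram matrices, hence positive
   semidefinite: unitarily diagonalizable (by the spectral theorem, proved by deflating along an
   eigenvector) with nonnegative eigenvalues. Since M^* M and M M^* have the same trace, so do A
   and B, and the trace is the sum of the eigenvalues. The Schatten norm only sees the spectrum:
   ||H^(1/2)||_{S_2p}^2p = sum_i lambda_i^p. If every lambda_i is at most c = (sum_j nu_j) / d, then
   sum_i lambda_i^p <= c^(p-1) sum_i lambda_i = d c^p <= sum_j nu_j^p, the last step because t^p
   lies above its tangent line at c. *)

lemma dim_adjoint [simp]:
  "dim_row (mat_adjoint A) = dim_col A" "dim_col (mat_adjoint A) = dim_row A"
  unfolding mat_adjoint_def by auto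

lemma index_mat_adjoint [simp]:
  "i < dim_col A \<Longrightarrow> j < dim_row A \<Longrightarrow> mat_adjoint A $$ (i, j) = conjugate (A $$ (j, i))"
  unfolding mat_adjoint_def by (auto simp: mat_of_rows_index)

lemma adjoint_carrier_mat_iff [simp]:
  "mat_adjoint A \<in> carrier_mat n m \<longleftrightarrow> A \<in> carrier_mat m n"
  unfolding carrier_mat_def by auto

lemma adjoint_adjoint [simp]: "mat_adjoint (mat_adjoint (A :: complex mat)) = A"
  by (rule eq_matI) simp_all

lemma adjoint_one [simp]: "mat_adjoint (1\<^sub>m n :: complex mat) = 1\<^sub>m n"
  by (rule eq_matI) simp_all

lemma adjoint_zero [simp]: "mat_adjoint (0\<^sub>m n m :: complex mat) = 0\<^sub>m m n"
  by (rule eq_matI) simp_all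

lemma adjoint_mult:
  fixes A B :: "complex mat"
  assumes "dim_col A = dim_row B"
  shows "mat_adjoint (A * B) = mat_adjoint B * mat_adjoint A"
  by (rule eq_matI) (use assms in \<open>simp_all add: scalar_prod_def sum_conjugate mult.commute\<close>)

lemma adjoint_four_block_mat:
  fixes A B C D :: "complex mat"
  assumes "A \<in> carrier_mat n1 m1" "B \<in> carrier_mat n1 m2" "C \<in> carrier_mat n2 m1" "D \<in> carrier_mat n2 m2"
  shows "mat_adjoint (four_block_mat A B C D) =
    four_block_mat (mat_adjoint A) (mat_adjoint C) (mat_adjoint B) (mat_adjoint D)"
  by (rule eq_matI) (use assms in simp_all)

lemma real_diag_carrier_mat [simp]: "real_diag n r \<in> carrier_mat n n"
  by (simp add: real_diag_def)

lemma dim_real_diag [simp]: "dim_row (real_diag n r) = n" "dim_col (real_diag n r) = n"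
  by (simp_all add: real_diag_def)

lemma index_real_diag [simp]:
  "i < n \<Longrightarrow> j < n \<Longrightarrow> real_diag n r $$ (i, j) = (if i = j then complex_of_real (r i) else 0)"
  by (simp add: real_diag_def)

lemma adjoint_real_diag [simp]: "mat_adjoint (real_diag n r) = real_diag n r"
  by (rule eq_matI) simp_all

lemma real_diag_mult: "real_diag n r * real_diag n s = real_diag n (\<lambda>i. r i * s i)"
proof (rule eq_matI)
  fix i j assume ij: "i < dim_row (real_diag n (\<lambda>i. r i * s i))" "j < dim_col (real_diag n (\<lambda>i. r i * s i))"
  have "(\<Sum>k = 0..<n. (if i = k then complex_of_real (r i) else 0) * (if k = j then complex_of_real (s k) else 0)) =
      (\<Sum>k\<in>{i}. (if i = k then complex_of_real (r i) else 0) * (if k = j then complex_of_real (s k) else 0))"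
    using ij by (intro sum.mono_neutral_right) auto
  then show "(real_diag n r * real_diag n s) $$ (i, j) = real_diag n (\<lambda>i. r i * s i) $$ (i, j)"
    using ij by (simp add: scalar_prod_def)
qed simp_all

lemma real_diag_one: "real_diag n (\<lambda>_. 1) = 1\<^sub>m n"
  by (rule eq_matI) simp_all

lemma col_mult_real_diag:
  assumes "W \<in> carrier_mat m n" "j < n"
  shows "col (W * real_diag n s) j = complex_of_real (s j) \<cdot>\<^sub>v col W j"
proof (rule eq_vecI)
  fix i assume "i < dim_vec (complex_of_real (s j) \<cdot>\<^sub>v col W j)"
  then have i: "i < m" using assms by simp
  have "(\<Sum>l = 0..<n. W $$ (i, l) * (if l = j then complex_of_real (s l) else 0)) =
      (\<Sum>l\<in>{j}. W $$ (i, l) * (if l = j then complex_of_real (s l) else 0))"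
    using assms by (intro sum.mono_neutral_right) auto
  then show "col (W * real_diag n s) j $ i = (complex_of_real (s j) \<cdot>\<^sub>v col W j) $ i"
    using assms i by (simp add: scalar_prod_def mult.commute)
qed (use assms in simp)

lemma real_diag_four_block_mat:
  "four_block_mat (real_diag n1 r) (0\<^sub>m n1 n2) (0\<^sub>m n2 n1) (real_diag n2 s) =
    real_diag (n1 + n2) (\<lambda>i. if i < n1 then r i else s (i - n1))"
  by (rule eq_matI) auto

lemma mult_block_diag_mat:
  assumes "A \<in> carrier_mat n1 n1" "B \<in> carrier_mat n2 n2" "C \<in> carrier_mat n1 n1" "D \<in> carrier_mat n2 n2"
  shows "four_block_mat A (0\<^sub>m n1 n2) (0\<^sub>m n2 n1) B * four_block_mat C (0\<^sub>m n1 n2) (0\<^sub>m n2 n1) D =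
    four_block_mat (A * C) (0\<^sub>m n1 n2) (0\<^sub>m n2 n1) (B * D)"
  using assms by (subst mult_four_block_mat[of _ n1 n1 _ n2 _ n2 _ _ n1 _ n2]) auto

lemma mtrace_comm:
  fixes A B :: "'a::comm_ring mat"
  assumes "A \<in> carrier_mat m n" "B \<in> carrier_mat n m"
  shows "mtrace (A * B) = mtrace (B * A)"
proof -
  have "mtrace (A * B) = (\<Sum>i<m. \<Sum>k<n. A $$ (i, k) * B $$ (k, i))"
    using assms by (simp add: mtrace_def scalar_prod_def atLeast0LessThan)
  also have "\<dots> = (\<Sum>k<n. \<Sum>i<m. B $$ (k, i) * A $$ (i, k))"
    by (subst sum.swap) (simp add: mult.commute)
  also have "\<dots> = mtrace (B * A)"
    using assms by (simp add: mtrace_def scalar_prod_def atLeast0LessThan)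
  finally show ?thesis .
qed

lemma mtrace_real_diag: "mtrace (real_diag n r) = complex_of_real (\<Sum>i<n. r i)"
  by (simp add: mtrace_def)

lemma square_mult_carrier_mat [simp]:
  "A \<in> carrier_mat n n \<Longrightarrow> B \<in> carrier_mat n n \<Longrightarrow> A * B \<in> carrier_mat n n"
  by (rule mult_carrier_mat)

lemma adjoint_mult_square:
  fixes A B :: "complex mat"
  shows "A \<in> carrier_mat n n \<Longrightarrow> B \<in> carrier_mat n n \<Longrightarrow> mat_adjoint (A * B) = mat_adjoint B * mat_adjoint A"
  by (rule adjoint_mult) auto

lemma unitary_carrier_mat: "unitary n U \<Longrightarrow> U \<in> carrier_mat n n"
  by (simp add: unitary_def)

lemma unitary_adjoint: "unitary n U \<Longrightarrow> unitary n (mat_adjoint U)"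
  by (auto simp: unitary_def)

lemma unitaryI:
  assumes "U \<in> carrier_mat n n" "mat_adjoint U * U = 1\<^sub>m n"
  shows "unitary n U"
  using assms mat_mult_left_right_inverse[of "mat_adjoint U" n U] by (simp add: unitary_def)

lemma unitary_mult_cancel:
  assumes "unitary n U" "A \<in> carrier_mat n n"
  shows "mat_adjoint U * (U * A) = A" "U * (mat_adjoint U * A) = A"
  using assms by (simp_all add: unitary_def unitary_carrier_mat assoc_mult_mat[of _ n n _ n _ n, symmetric])

lemma unitary_mult:
  assumes "unitary n U" "unitary n V"
  shows "unitary n (U * V)"
proof (rule unitaryI)
  have [simp]: "U \<in> carrier_mat n n" "V \<in> carrier_mat n n"
    using assms by (simp_all add: unitary_carrier_mat)
  show "mat_adjoint (U * V) * (U * V) = 1\<^sub>m n"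
    using assms by (simp add: adjoint_mult_square[of _ n] assoc_mult_mat[of _ n n _ n _ n] unitary_mult_cancel)
      (simp add: unitary_def)
qed (use assms in \<open>simp add: unitary_carrier_mat\<close>)

lemma unitary_block_diag:
  assumes "unitary n1 U" "unitary n2 V"
  shows "unitary (n1 + n2) (four_block_mat U (0\<^sub>m n1 n2) (0\<^sub>m n2 n1) V)"
proof (rule unitaryI)
  have [simp]: "U \<in> carrier_mat n1 n1" "V \<in> carrier_mat n2 n2"
    using assms by (simp_all add: unitary_carrier_mat)
  show "four_block_mat U (0\<^sub>m n1 n2) (0\<^sub>m n2 n1) V \<in> carrier_mat (n1 + n2) (n1 + n2)" by simp
  show "mat_adjoint (four_block_mat U (0\<^sub>m n1 n2) (0\<^sub>m n2 n1) V) * four_block_mat U (0\<^sub>m n1 n2) (0\<^sub>m n2 n1) V =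
      1\<^sub>m (n1 + n2)"
    using assms by (simp add: adjoint_four_block_mat[of _ n1 n1 _ n2 _ n2] mult_block_diag_mat unitary_def)
qed

lemma block_diag_conj:
  fixes U V A B :: "complex mat"
  assumes "U \<in> carrier_mat n1 n1" "V \<in> carrier_mat n2 n2" "A \<in> carrier_mat n1 n1" "B \<in> carrier_mat n2 n2"
  shows "four_block_mat U (0\<^sub>m n1 n2) (0\<^sub>m n2 n1) V * four_block_mat A (0\<^sub>m n1 n2) (0\<^sub>m n2 n1) B *
      mat_adjoint (four_block_mat U (0\<^sub>m n1 n2) (0\<^sub>m n2 n1) V) =
    four_block_mat (U * A * mat_adjoint U) (0\<^sub>m n1 n2) (0\<^sub>m n2 n1) (V * B * mat_adjoint V)"
  using assms by (simp add: adjoint_four_block_mat[of _ n1 n1 _ n2 _ n2] mult_block_diag_mat)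

lemma unitary_conj_cancel:
  assumes "unitary n U" "A \<in> carrier_mat n n"
  shows "mat_adjoint U * (U * A * mat_adjoint U) * U = A"
  using assms unitary_carrier_mat[OF assms(1)]
  by (simp add: assoc_mult_mat[of _ n n _ n _ n] unitary_mult_cancel) (simp add: unitary_def)

lemma conj_conj_mult:
  fixes W X D :: "complex mat"
  assumes "W \<in> carrier_mat n n" "X \<in> carrier_mat n n" "D \<in> carrier_mat n n"
  shows "W * (X * D * mat_adjoint X) * mat_adjoint W = (W * X) * D * mat_adjoint (W * X)"
  using assms by (simp add: adjoint_mult_square[of _ n] assoc_mult_mat[of _ n n _ n _ n])

lemma mtrace_unitary_conj:
  assumes "unitary n U" "A \<in> carrier_mat n n"
  shows "mtrace (U * A * mat_adjoint U) = mtrace A"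
proof -
  have [simp]: "U \<in> carrier_mat n n" using assms(1) by (rule unitary_carrier_mat)
  have "mtrace ((U * A) * mat_adjoint U) = mtrace (mat_adjoint U * (U * A))"
    using assms(2) by (intro mtrace_comm[of _ n n]) simp_all
  then show ?thesis using assms by (simp add: unitary_mult_cancel)
qed

lemma unitary_conj_real_diag_mult:
  assumes "unitary n U"
  shows "(U * real_diag n r * mat_adjoint U) * (U * real_diag n s * mat_adjoint U) =
    U * real_diag n (\<lambda>i. r i * s i) * mat_adjoint U"
  using assms unitary_carrier_mat[OF assms]
  by (simp add: assoc_mult_mat[of _ n n _ n _ n] unitary_mult_cancel)
    (simp add: assoc_mult_mat[of _ n n _ n _ n, symmetric] real_diag_mult)

lemma adjoint_unitary_conj_real_diag:
  fixes U :: "complex mat"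
  assumes "U \<in> carrier_mat n n"
  shows "mat_adjoint (U * real_diag n r * mat_adjoint U) = U * real_diag n r * mat_adjoint U"
  using assms by (simp add: adjoint_mult_square[of _ n] assoc_mult_mat[of _ n n _ n _ n])

lemma mat_sum_Suc: "mat_sum k f (Suc N) = f 0 + mat_sum k (\<lambda>j. f (Suc j)) N"
  unfolding mat_sum_def by (simp add: upt_conv_Cons map_Suc_upt[symmetric] foldr_map o_def del: upt_Suc)

lemma mat_sum_cong: "(\<And>j. j < N \<Longrightarrow> f j = g j) \<Longrightarrow> mat_sum k f N = mat_sum k g N"
  unfolding mat_sum_def by (intro foldr_cong) auto

lemma mat_sum_carrier_mat:
  "(\<forall>j<N. f j \<in> carrier_mat k k) \<Longrightarrow> mat_sum k f N \<in> carrier_mat k k"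
proof (induction N arbitrary: f)
  case 0
  then show ?case by (simp add: mat_sum_def)
next
  case (Suc N)
  then show ?case by (simp add: mat_sum_Suc)
qed

lemma index_mat_sum:
  "(\<forall>j<N. f j \<in> carrier_mat k k) \<Longrightarrow> i < k \<Longrightarrow> j < k \<Longrightarrow>
    mat_sum k f N $$ (i, j) = (\<Sum>l<N. f l $$ (i, j))"
proof (induction N arbitrary: f)
  case 0
  then show ?case by (simp add: mat_sum_def)
next
  case (Suc N)
  have "mat_sum k (\<lambda>l. f (Suc l)) N \<in> carrier_mat k k"
    using Suc.prems by (intro mat_sum_carrier_mat) simp
  then show ?case using Suc.IH[of "\<lambda>l. f (Suc l)"] Suc.prems
    by (simp add: mat_sum_Suc sum.lessThan_Suc_shift del: sum.lessThan_Suc)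
qed

lemma mtrace_mat_sum:
  assumes "\<forall>j<N. f j \<in> carrier_mat k k"
  shows "mtrace (mat_sum k f N) = (\<Sum>j<N. mtrace (f j))"
proof -
  have "mtrace (mat_sum k f N) = (\<Sum>i<k. \<Sum>j<N. f j $$ (i, i))"
    using assms mat_sum_carrier_mat[OF assms] by (simp add: mtrace_def index_mat_sum)
  also have "\<dots> = (\<Sum>j<N. mtrace (f j))"
    using assms by (subst sum.swap) (auto simp: mtrace_def intro!: sum.cong)
  finally show ?thesis .
qed

lemma adjoint_mat_sum:
  assumes "\<forall>j<N. f j \<in> carrier_mat k k"
  shows "mat_adjoint (mat_sum k f N) = mat_sum k (\<lambda>j. mat_adjoint (f j)) N"
proof -
  have adj: "\<forall>j<N. mat_adjoint (f j) \<in> carrier_mat k k" using assms by simp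
  show ?thesis
    using assms adj mat_sum_carrier_mat[OF assms] mat_sum_carrier_mat[OF adj]
    by (intro eq_matI) (auto simp: index_mat_sum sum_conjugate intro!: sum.cong)
qed

lemma mult_mat_sum_mult:
  assumes "A \<in> carrier_mat k k" "B \<in> carrier_mat k k" "\<forall>j<N. f j \<in> carrier_mat k k"
  shows "A * mat_sum k f N * B = mat_sum k (\<lambda>j. A * f j * B) N"
  using assms(3)
proof (induction N arbitrary: f)
  case 0
  then show ?case using assms by (simp add: mat_sum_def)
next
  case (Suc N)
  have S: "mat_sum k (\<lambda>j. f (Suc j)) N \<in> carrier_mat k k"
    using Suc.prems by (intro mat_sum_carrier_mat) simp
  have F: "f 0 \<in> carrier_mat k k" using Suc.prems by simp
  have "A * (f 0 + mat_sum k (\<lambda>j. f (Suc j)) N) * B =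
      A * f 0 * B + A * mat_sum k (\<lambda>j. f (Suc j)) N * B"
    using assms(1,2) F S by (simp add: mult_add_distrib_mat[OF assms(1) F S] add_mult_distrib_mat[of _ k k])
  then show ?case using Suc.IH[of "\<lambda>j. f (Suc j)"] Suc.prems by (simp add: mat_sum_Suc)
qed

section \<open>Spectral theorem for Hermitian matrices\<close>

lemma corthogonal_cscalar_prod_self:
  assumes "corthogonal ws" "j < length ws"
  shows "ws ! j \<bullet>c ws ! j = complex_of_real (Re (ws ! j \<bullet>c ws ! j))" "0 < Re (ws ! j \<bullet>c ws ! j)"
proof -
  have "ws ! j \<bullet>c ws ! j \<noteq> 0" "ws ! j \<bullet>c ws ! j \<ge> 0"
    using corthogonalD[OF assms(1) assms(2) assms(2)] by auto
  then show "ws ! j \<bullet>c ws ! j = complex_of_real (Re (ws ! j \<bullet>c ws ! j))" "0 < Re (ws ! j \<bullet>c ws ! j)"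
    by (auto simp: less_eq_complex_def complex_eq_iff)
qed

lemma adjoint_mat_of_cols_corthogonal:
  assumes ws: "set ws \<subseteq> carrier_vec n" "corthogonal ws" "length ws = n"
  shows "mat_adjoint (mat_of_cols n ws) * mat_of_cols n ws = real_diag n (\<lambda>j. Re (ws ! j \<bullet>c ws ! j))"
proof (rule eq_matI)
  fix i j assume "i < dim_row (real_diag n (\<lambda>j. Re (ws ! j \<bullet>c ws ! j)))"
    "j < dim_col (real_diag n (\<lambda>j. Re (ws ! j \<bullet>c ws ! j)))"
  then have ij: "i < n" "j < n" by simp_all
  then have "ws ! i \<in> carrier_vec n" "ws ! j \<in> carrier_vec n"
    using ws(1,3) by (metis nth_mem subsetD)+
  then have [simp]: "dim_vec (ws ! i) = n" "dim_vec (ws ! j) = n" by (metis carrier_vecD)+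
  have "(mat_adjoint (mat_of_cols n ws) * mat_of_cols n ws) $$ (i, j) = ws ! j \<bullet>c ws ! i"
    using ij ws(3) by (simp add: scalar_prod_def mat_of_cols_index mult.commute)
  also have "\<dots> = real_diag n (\<lambda>j. Re (ws ! j \<bullet>c ws ! j)) $$ (i, j)"
  proof (cases "i = j")
    case True
    then show ?thesis using ij ws(3) corthogonal_cscalar_prod_self(1)[OF ws(2), of i] by (metis index_real_diag)
  next
    case False
    then show ?thesis using ij ws(3) corthogonalD[OF ws(2), of j i] by simp
  qed
  finally show "(mat_adjoint (mat_of_cols n ws) * mat_of_cols n ws) $$ (i, j) =
      real_diag n (\<lambda>j. Re (ws ! j \<bullet>c ws ! j)) $$ (i, j)" .
qed (use ws(3) in simp_all)

lemma unitary_normalize_cols: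
  assumes W: "W \<in> carrier_mat n n" and G: "mat_adjoint W * W = real_diag n g" and g: "\<forall>j<n. 0 < g j"
  shows "unitary n (W * real_diag n (\<lambda>j. 1 / sqrt (g j)))"
proof (rule unitaryI)
  let ?S = "real_diag n (\<lambda>j. 1 / sqrt (g j))"
  have "mat_adjoint (W * ?S) * (W * ?S) = ?S * (mat_adjoint W * W) * ?S"
    using W by (simp add: adjoint_mult_square[of _ n] assoc_mult_mat[of _ n n _ n _ n])
  also have "\<dots> = real_diag n (\<lambda>_. 1)"
    unfolding G real_diag_mult using g by (intro eq_matI) (auto simp: field_simps abs_of_pos)
  finally show "mat_adjoint (W * ?S) * (W * ?S) = 1\<^sub>m n" by (simp add: real_diag_one)
qed (use W in simp)

lemma unitary_with_first_col:
  assumes v: "v \<in> carrier_vec n" "v \<noteq> 0\<^sub>v n"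
  shows "\<exists>W c. unitary n W \<and> col W 0 = c \<cdot>\<^sub>v v"
proof -
  interpret cof_vec_space n "TYPE(complex)" .
  define ws where "ws = gram_schmidt n (basis_completion v)"
  have n: "n > 0" using v by (cases n) auto
  from basis_completion[OF v]
  have b: "distinct (basis_completion v)" "\<not> lin_dep (set (basis_completion v))"
    "set (basis_completion v) \<subseteq> carrier_vec n" "length (basis_completion v) = n" "hd (basis_completion v) = v"
    by auto
  have ws: "set ws \<subseteq> carrier_vec n" "corthogonal ws" "length ws = n"
    using gram_schmidt_result[OF b(3,1,2) ws_def] b(4) by auto
  obtain vs where "basis_completion v = v # vs"
    using b(4,5) n by (cases "basis_completion v") auto
  then have "hd ws = v" unfolding ws_def using v(1) by simp
  then have "ws ! 0 = v"
    using ws(3) n by (cases ws) auto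
  define g where "g j = Re (ws ! j \<bullet>c ws ! j)" for j
  define W where "W = mat_of_cols n ws * real_diag n (\<lambda>j. 1 / sqrt (g j))"
  have "unitary n W"
    unfolding W_def g_def using ws corthogonal_cscalar_prod_self(2)[OF ws(2)]
    by (intro unitary_normalize_cols adjoint_mat_of_cols_corthogonal) auto
  moreover have "col W 0 = complex_of_real (1 / sqrt (g 0)) \<cdot>\<^sub>v v"
  proof -
    have "col (mat_of_cols n ws) 0 = v"
      using n ws \<open>ws ! 0 = v\<close> v(1) by simp
    then show ?thesis
      unfolding W_def using n ws
      by (subst col_mult_real_diag[of _ n n]) (simp_all add: mat_of_cols_carrier(1)[of n ws, unfolded ws(3)])
  qed
  ultimately show ?thesis by (intro exI conjI)
qed

lemma hermitian_block_of_first_col: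
  fixes C :: "complex mat"
  assumes C: "C \<in> carrier_mat (Suc m) (Suc m)" and herm: "mat_adjoint C = C"
    and col0: "col C 0 = e \<cdot>\<^sub>v unit_vec (Suc m) 0"
  shows "\<exists>a D. D \<in> carrier_mat m m \<and> mat_adjoint D = D \<and>
    C = four_block_mat (real_diag 1 (\<lambda>_. a)) (0\<^sub>m 1 m) (0\<^sub>m m 1) D"
proof -
  have sym: "C $$ (i, j) = cnj (C $$ (j, i))" if "i < Suc m" "j < Suc m" for i j
    using that C arg_cong[OF herm, of "\<lambda>A. A $$ (i, j)"] by simp
  have col: "C $$ (i, 0) = (if i = 0 then e else 0)" if "i < Suc m" for i
    using arg_cong[OF col0, of "\<lambda>v. v $ i"] that C by auto
  have e: "e = complex_of_real (Re e)"
    using sym[of 0 0] col[of 0] by (simp add: complex_eq_iff)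
  define D where "D = mat m m (\<lambda>(i, j). C $$ (Suc i, Suc j))"
  have "mat_adjoint D = D"
  proof (rule eq_matI)
    fix i j assume "i < dim_row D" "j < dim_col D"
    then show "mat_adjoint D $$ (i, j) = D $$ (i, j)" using sym[of "Suc i" "Suc j"] by (simp add: D_def)
  qed (simp_all add: D_def)
  moreover have "C = four_block_mat (real_diag 1 (\<lambda>_. Re e)) (0\<^sub>m 1 m) (0\<^sub>m m 1) D"
  proof (rule eq_matI)
    fix i j assume "i < dim_row (four_block_mat (real_diag 1 (\<lambda>_. Re e)) (0\<^sub>m 1 m) (0\<^sub>m m 1) D)"
      "j < dim_col (four_block_mat (real_diag 1 (\<lambda>_. Re e)) (0\<^sub>m 1 m) (0\<^sub>m m 1) D)"
    then have ij: "i < Suc m" "j < Suc m" by (simp_all add: D_def)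
    show "C $$ (i, j) = four_block_mat (real_diag 1 (\<lambda>_. Re e)) (0\<^sub>m 1 m) (0\<^sub>m m 1) D $$ (i, j)"
      using ij col sym[of 0 j] e by (cases i; cases j) (auto simp: D_def)
  qed (use C in \<open>simp_all add: D_def\<close>)
  moreover have "D \<in> carrier_mat m m" by (simp add: D_def)
  ultimately show ?thesis by blast
qed

lemma hermitian_unitary_deflation:
  fixes H :: "complex mat"
  assumes H: "H \<in> carrier_mat (Suc m) (Suc m)" and herm: "mat_adjoint H = H"
  shows "\<exists>W a D. unitary (Suc m) W \<and> D \<in> carrier_mat m m \<and> mat_adjoint D = D \<and>
    mat_adjoint W * H * W = four_block_mat (real_diag 1 (\<lambda>_. a)) (0\<^sub>m 1 m) (0\<^sub>m m 1) D"
proof -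
  obtain e where "eigenvalue H e"
    using spectrum_non_empty[OF H] by (auto simp: spectrum_def)
  then obtain v where v: "v \<in> carrier_vec (Suc m)" "v \<noteq> 0\<^sub>v (Suc m)" "H *\<^sub>v v = e \<cdot>\<^sub>v v"
    using H by (auto simp: eigenvalue_def eigenvector_def)
  obtain W c where W: "unitary (Suc m) W" and Wv: "col W 0 = c \<cdot>\<^sub>v v"
    using unitary_with_first_col[OF v(1,2)] by blast
  have [simp]: "W \<in> carrier_mat (Suc m) (Suc m)" using W by (rule unitary_carrier_mat)
  have cW: "col W 0 \<in> carrier_vec (Suc m)"
    using col_dim[of W 0] by (simp add: carrier_matD(1)[OF \<open>W \<in> carrier_mat (Suc m) (Suc m)\<close>])
  have "col (mat_adjoint W * H * W) 0 = (mat_adjoint W * H) *\<^sub>v col W 0"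
    by (rule col_mult2[of _ "Suc m" "Suc m" _ "Suc m"]) (use H in simp_all)
  also have "\<dots> = mat_adjoint W *\<^sub>v (H *\<^sub>v col W 0)"
    by (rule assoc_mult_mat_vec[of _ "Suc m" "Suc m" _ "Suc m"]) (use H cW in simp_all)
  also have "H *\<^sub>v col W 0 = e \<cdot>\<^sub>v col W 0"
    unfolding Wv using H v by (simp add: mult_mat_vec smult_smult_assoc mult.commute)
  also have "mat_adjoint W *\<^sub>v (e \<cdot>\<^sub>v col W 0) = e \<cdot>\<^sub>v (mat_adjoint W *\<^sub>v col W 0)"
    by (rule mult_mat_vec[of _ "Suc m" "Suc m"]) (simp_all add: cW)
  also have "mat_adjoint W *\<^sub>v col W 0 = col (mat_adjoint W * W) 0"
    by (rule col_mult2[symmetric, of _ "Suc m" "Suc m" _ "Suc m"]) simp_all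
  also have "\<dots> = unit_vec (Suc m) 0"
    using W by (simp add: unitary_def)
  finally have "col (mat_adjoint W * H * W) 0 = e \<cdot>\<^sub>v unit_vec (Suc m) 0" .
  moreover have "mat_adjoint (mat_adjoint W * H * W) = mat_adjoint W * H * W"
    using H herm by (simp add: adjoint_mult_square[of _ "Suc m"] assoc_mult_mat[of _ "Suc m" "Suc m" _ "Suc m" _ "Suc m"])
  moreover have "mat_adjoint W * H * W \<in> carrier_mat (Suc m) (Suc m)" using H by simp
  ultimately show ?thesis using hermitian_block_of_first_col W by blast
qed

theorem hermitian_unitary_diagonalization:
  fixes H :: "complex mat"
  assumes "H \<in> carrier_mat n n" "mat_adjoint H = H"
  shows "\<exists>U r. unitary n U \<and> H = U * real_diag n r * mat_adjoint U"
  using assms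
proof (induction n arbitrary: H)
  case 0
  then have "H = 1\<^sub>m 0 * real_diag 0 (\<lambda>_. 0) * mat_adjoint (1\<^sub>m 0)" by (intro eq_matI) auto
  moreover have "unitary 0 (1\<^sub>m 0)" by (simp add: unitary_def)
  ultimately show ?case by blast
next
  case (Suc m)
  obtain W a D where W: "unitary (Suc m) W" and D: "D \<in> carrier_mat m m" "mat_adjoint D = D"
    and WHW: "mat_adjoint W * H * W = four_block_mat (real_diag 1 (\<lambda>_. a)) (0\<^sub>m 1 m) (0\<^sub>m m 1) D"
    using hermitian_unitary_deflation[OF Suc.prems] by blast
  obtain V r where V: "unitary m V" and DV: "D = V * real_diag m r * mat_adjoint V"
    using Suc.IH[OF D] by blast
  define X where "X = four_block_mat (1\<^sub>m 1) (0\<^sub>m 1 m) (0\<^sub>m m 1) V"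
  have X: "unitary (Suc m) X"
    unfolding X_def using unitary_block_diag[OF _ V, of 1 "1\<^sub>m 1"] by (simp add: unitary_def)
  define r' where "r' i = (if i < 1 then a else r (i - 1))" for i
  have "real_diag (Suc m) r' = four_block_mat (real_diag 1 (\<lambda>_. a)) (0\<^sub>m 1 m) (0\<^sub>m m 1) (real_diag m r)"
    unfolding r'_def using real_diag_four_block_mat[of 1 "\<lambda>_. a" m r] by simp
  then have "X * real_diag (Suc m) r' * mat_adjoint X =
      four_block_mat (1\<^sub>m 1 * real_diag 1 (\<lambda>_. a) * mat_adjoint (1\<^sub>m 1)) (0\<^sub>m 1 m) (0\<^sub>m m 1)
        (V * real_diag m r * mat_adjoint V)"
    unfolding X_def using unitary_carrier_mat[OF V] by (simp add: block_diag_conj)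
  also have "\<dots> = mat_adjoint W * H * W"
    unfolding WHW DV by simp
  finally have "mat_adjoint W * H * W = X * real_diag (Suc m) r' * mat_adjoint X" ..
  then have "H = W * (X * real_diag (Suc m) r' * mat_adjoint X) * mat_adjoint W"
    using unitary_conj_cancel[OF unitary_adjoint[OF W] Suc.prems(1)] by simp
  also have "\<dots> = (W * X) * real_diag (Suc m) r' * mat_adjoint (W * X)"
    using W X by (intro conj_conj_mult[of _ "Suc m"]) (simp_all add: unitary_carrier_mat)
  finally show ?case using unitary_mult[OF W X] by blast
qed

section \<open>Positive semidefinite matrices\<close>

(* Spectral form: exactly the decompositions among which psd_pow chooses. *)
definition psd :: "nat \<Rightarrow> complex mat \<Rightarrow> bool" where
  "psd n H \<longleftrightarrow> (\<exists>U r. unitary n U \<and> (\<forall>i<n. 0 \<le> r i) \<and> H = U * real_diag n r * mat_adjoint U)"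

lemma psd_carrier_mat: "psd n H \<Longrightarrow> H \<in> carrier_mat n n"
  by (auto simp: psd_def dest: unitary_carrier_mat)

lemma psdI:
  fixes H :: "complex mat"
  assumes H: "H \<in> carrier_mat n n" "mat_adjoint H = H"
    and diag: "\<And>U i. unitary n U \<Longrightarrow> i < n \<Longrightarrow> 0 \<le> Re ((mat_adjoint U * H * U) $$ (i, i))"
  shows "psd n H"
proof -
  obtain U r where U: "unitary n U" and HU: "H = U * real_diag n r * mat_adjoint U"
    using hermitian_unitary_diagonalization[OF H] by blast
  have "mat_adjoint U * H * U = real_diag n r"
    unfolding HU using U by (simp add: unitary_conj_cancel)
  then have "0 \<le> r i" if "i < n" for i
    using diag[OF U that] that by simp
  then show ?thesis using U HU by (auto simp: psd_def)
qed

lemma Re_gram_diag_nonneg: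
  fixes Y :: "complex mat"
  assumes "i < dim_col Y"
  shows "0 \<le> Re ((mat_adjoint Y * Y) $$ (i, i))"
proof -
  have "Re ((mat_adjoint Y * Y) $$ (i, i)) = (\<Sum>c = 0..<dim_row Y. (Re (Y $$ (c, i)))\<^sup>2 + (Im (Y $$ (c, i)))\<^sup>2)"
    using assms by (simp add: scalar_prod_def Re_sum power2_eq_square)
  also have "\<dots> \<ge> 0" by (intro sum_nonneg) simp
  finally show ?thesis .
qed

lemma gram_carrier_mat: "dim_col (Y :: complex mat) = k \<Longrightarrow> mat_adjoint Y * Y \<in> carrier_mat k k"
  by (intro carrier_matI) simp_all

lemma conj_gram_eq_gram_mult:
  fixes Y U :: "complex mat"
  assumes Y: "Y \<in> carrier_mat q k" and U: "U \<in> carrier_mat k n"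
  shows "mat_adjoint U * (mat_adjoint Y * Y) * U = mat_adjoint (Y * U) * (Y * U)"
proof -
  have Y': "mat_adjoint Y \<in> carrier_mat k q" and U': "mat_adjoint U \<in> carrier_mat n k"
    using Y U by simp_all
  have "mat_adjoint U * (mat_adjoint Y * Y) * U = mat_adjoint U * (mat_adjoint Y * Y * U)"
    using assoc_mult_mat[OF U' mult_carrier_mat[OF Y' Y] U] .
  also have "mat_adjoint Y * Y * U = mat_adjoint Y * (Y * U)"
    using Y' Y U by (rule assoc_mult_mat)
  also have "mat_adjoint U * (mat_adjoint Y * (Y * U)) = mat_adjoint U * mat_adjoint Y * (Y * U)"
    using assoc_mult_mat[OF U' Y' mult_carrier_mat[OF Y U], symmetric] .
  also have "mat_adjoint U * mat_adjoint Y = mat_adjoint (Y * U)"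
    using Y U by (intro adjoint_mult[symmetric]) simp
  finally show ?thesis .
qed

lemma psd_gram_sum:
  fixes Y :: "nat \<Rightarrow> complex mat"
  assumes Y: "\<forall>j<N. dim_col (Y j) = k"
  shows "psd k (mat_sum k (\<lambda>j. mat_adjoint (Y j) * Y j) N)"
proof (rule psdI)
  have G: "\<forall>j<N. mat_adjoint (Y j) * Y j \<in> carrier_mat k k" using Y by (simp add: gram_carrier_mat)
  show "mat_sum k (\<lambda>j. mat_adjoint (Y j) * Y j) N \<in> carrier_mat k k"
    using G by (rule mat_sum_carrier_mat)
  show "mat_adjoint (mat_sum k (\<lambda>j. mat_adjoint (Y j) * Y j) N) = mat_sum k (\<lambda>j. mat_adjoint (Y j) * Y j) N"
    using G by (simp add: adjoint_mat_sum adjoint_mult cong: mat_sum_cong)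
  fix U i assume U: "unitary k U" and i: "i < k"
  have [simp]: "U \<in> carrier_mat k k" using U by (rule unitary_carrier_mat)
  have YU: "\<forall>j<N. mat_adjoint (Y j * U) * (Y j * U) \<in> carrier_mat k k"
    using carrier_matD(2)[OF \<open>U \<in> carrier_mat k k\<close>] by (simp add: gram_carrier_mat)
  have "mat_adjoint U * mat_sum k (\<lambda>j. mat_adjoint (Y j) * Y j) N * U =
      mat_sum k (\<lambda>j. mat_adjoint U * (mat_adjoint (Y j) * Y j) * U) N"
    using G by (intro mult_mat_sum_mult) simp_all
  also have "\<dots> = mat_sum k (\<lambda>j. mat_adjoint (Y j * U) * (Y j * U)) N"
  proof (rule mat_sum_cong)
    fix j assume "j < N"
    then have "Y j \<in> carrier_mat (dim_row (Y j)) k" using Y by (intro carrier_matI) simp_all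
    then show "mat_adjoint U * (mat_adjoint (Y j) * Y j) * U = mat_adjoint (Y j * U) * (Y j * U)"
      using \<open>U \<in> carrier_mat k k\<close> by (rule conj_gram_eq_gram_mult)
  qed
  finally have "Re ((mat_adjoint U * mat_sum k (\<lambda>j. mat_adjoint (Y j) * Y j) N * U) $$ (i, i)) =
      (\<Sum>j<N. Re ((mat_adjoint (Y j * U) * (Y j * U)) $$ (i, i)))"
    by (simp only: index_mat_sum[OF YU i i] Re_sum)
  also have "\<dots> \<ge> 0"
    using i carrier_matD(2)[OF \<open>U \<in> carrier_mat k k\<close>] by (intro sum_nonneg Re_gram_diag_nonneg) simp
  finally show "0 \<le> Re ((mat_adjoint U * mat_sum k (\<lambda>j. mat_adjoint (Y j) * Y j) N * U) $$ (i, i))" .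
qed

section \<open>A power-sum inequality\<close>

lemma power_ge_tangent:
  fixes b c :: real
  assumes b: "0 \<le> b" and c: "0 \<le> c"
  shows "c ^ p + real p * c ^ (p - 1) * (b - c) \<le> b ^ p"
proof (cases "c = 0")
  case True
  then show ?thesis using b by (cases p) (auto simp: power_0_left)
next
  case False
  with c have c: "0 < c" by simp
  have "1 + real p * (b / c - 1) \<le> (1 + (b / c - 1)) ^ p"
    by (rule Bernoulli_inequality) (use b c in simp)
  then have "c ^ p * (1 + real p * (b / c - 1)) \<le> c ^ p * (b / c) ^ p"
    using c by (intro mult_left_mono) simp_all
  also have "c ^ p * (b / c) ^ p = b ^ p"
    using c by (simp add: power_divide)
  also have "c ^ p * (1 + real p * (b / c - 1)) = c ^ p + real p * c ^ (p - 1) * (b - c)"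
    using c by (cases p) (simp_all add: field_simps)
  finally show ?thesis .
qed

lemma mean_power_le_sum_power:
  fixes b :: "nat \<Rightarrow> real"
  assumes b: "\<forall>i<d. 0 \<le> b i"
  shows "real d * ((\<Sum>i<d. b i) / real d) ^ p \<le> (\<Sum>i<d. b i ^ p)"
proof -
  define c where "c = (\<Sum>i<d. b i) / real d"
  have c: "0 \<le> c" unfolding c_def using b by (intro divide_nonneg_nonneg sum_nonneg) simp_all
  have "(\<Sum>i<d. c ^ p + real p * c ^ (p - 1) * (b i - c)) =
      real d * c ^ p + real p * c ^ (p - 1) * ((\<Sum>i<d. b i) - real d * c)"
    by (simp add: sum.distrib sum_distrib_left[symmetric] sum_subtractf)
  also have "(\<Sum>i<d. b i) - real d * c = 0"
    unfolding c_def by (cases "d = 0") simp_all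
  finally have "real d * c ^ p = (\<Sum>i<d. c ^ p + real p * c ^ (p - 1) * (b i - c))" by simp
  also have "\<dots> \<le> (\<Sum>i<d. b i ^ p)"
    using b c by (intro sum_mono power_ge_tangent) simp_all
  finally show ?thesis unfolding c_def .
qed

lemma power_sum_le_of_le_mean:
  fixes a b :: "nat \<Rightarrow> real"
  assumes a: "\<forall>i<K. 0 \<le> a i" and b: "\<forall>i<d. 0 \<le> b i"
    and sums: "(\<Sum>i<K. a i) = (\<Sum>i<d. b i)"
    and le_mean: "\<forall>i<K. a i \<le> (\<Sum>i<d. b i) / real d" and p: "1 \<le> p"
  shows "(\<Sum>i<K. a i ^ p) \<le> (\<Sum>i<d. b i ^ p)"
proof -
  define c where "c = (\<Sum>i<d. b i) / real d"
  have c: "0 \<le> c" unfolding c_def using b by (intro divide_nonneg_nonneg sum_nonneg) simp_all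
  have "(\<Sum>i<K. a i ^ p) \<le> (\<Sum>i<K. a i * c ^ (p - 1))"
  proof (rule sum_mono)
    fix i assume "i \<in> {..<K}"
    then have "0 \<le> a i" "a i \<le> c" using a le_mean by (simp_all add: c_def)
    then have "a i * a i ^ (p - 1) \<le> a i * c ^ (p - 1)" by (intro mult_left_mono power_mono) simp_all
    then show "a i ^ p \<le> a i * c ^ (p - 1)" using p by (cases p) simp_all
  qed
  also have "\<dots> = real d * c ^ p"
  proof (cases "d = 0")
    case False
    then have "(\<Sum>i<K. a i) = real d * c" unfolding sums c_def by simp
    then show ?thesis using p by (cases p) (simp_all add: sum_distrib_right[symmetric])
  qed (use sums in \<open>simp add: sum_distrib_right[symmetric]\<close>)
  also have "\<dots> \<le> (\<Sum>i<d. b i ^ p)"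
    unfolding c_def using b by (rule mean_power_le_sum_power)
  finally show ?thesis .
qed

section \<open>Spectrum, matrix powers and Schatten norms\<close>

lemma proots_prod_linear_factors: "proots (\<Prod>a\<leftarrow>as. [:- a, 1:]) = mset (as :: 'a :: idom list)"
proof (induction as)
  case (Cons a as)
  have "(\<Prod>a\<leftarrow>as. [:- a, 1:]) \<noteq> 0" by (auto simp: prod_list_zero_iff)
  then have "proots ([:- a, 1:] * (\<Prod>a\<leftarrow>as. [:- a, 1:])) = proots [:- a, 1:] + proots (\<Prod>a\<leftarrow>as. [:- a, 1:])"
    by (intro proots_mult) simp_all
  then show ?case using Cons proots_linear_factor[of "- a"] by simp
qed simp

lemma eigvals_unitary_conj:
  assumes U: "unitary n U"
  shows "eigvals (U * real_diag n r * mat_adjoint U) = image_mset (\<lambda>i. complex_of_real (r i)) (mset_set {..<n})"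
proof -
  have [simp]: "U \<in> carrier_mat n n" using U by (rule unitary_carrier_mat)
  have "similar_mat (U * real_diag n r * mat_adjoint U) (real_diag n r)"
    using U by (intro similar_matI[of _ _ U "mat_adjoint U" n]) (auto simp: unitary_def)
  then have "char_poly (U * real_diag n r * mat_adjoint U) = char_poly (real_diag n r)"
    by (rule char_poly_similar)
  also have "\<dots> = (\<Prod>a\<leftarrow>diag_mat (real_diag n r). [:- a, 1:])"
    by (rule char_poly_upper_triangular[of _ n]) (simp_all add: upper_triangular_def)
  also have "diag_mat (real_diag n r) = map (\<lambda>i. complex_of_real (r i)) [0..<n]"
    by (simp add: diag_mat_def)
  finally show ?thesis
    by (simp only: eigvals_def proots_prod_linear_factors mset_map mset_set_upto_eq_mset_upto)
qed

lemma psd_eigvals: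
  assumes "psd n H"
  shows "\<exists>r. (\<forall>i<n. 0 \<le> r i) \<and> eigvals H = image_mset (\<lambda>i. complex_of_real (r i)) (mset_set {..<n})"
  using assms by (auto simp: psd_def eigvals_unitary_conj)

lemma sum_eigvals_psd:
  assumes "psd n H"
  shows "sum_mset (eigvals H) = mtrace H"
proof -
  obtain U r where U: "unitary n U" and HU: "H = U * real_diag n r * mat_adjoint U"
    using assms by (auto simp: psd_def)
  show ?thesis
    unfolding HU eigvals_unitary_conj[OF U] mtrace_unitary_conj[OF U real_diag_carrier_mat] mtrace_real_diag
    by (simp add: sum_unfold_sum_mset image_mset.compositionality o_def)
qed

lemma psd_pow_spectral:
  assumes "psd n H"
  shows "\<exists>U r. unitary n U \<and> (\<forall>i<n. 0 \<le> r i) \<and> H = U * real_diag n r * mat_adjoint U \<and>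
    psd_pow s H = U * real_diag n (\<lambda>i. r i powr s) * mat_adjoint U"
proof -
  have "\<exists>R m U r. H \<in> carrier_mat m m \<and> unitary m U \<and> (\<forall>i<m. 0 \<le> r i) \<and>
      H = U * real_diag m r * mat_adjoint U \<and> R = U * real_diag m (\<lambda>i. r i powr s) * mat_adjoint U"
    using assms psd_carrier_mat[OF assms] by (auto simp: psd_def)
  then have "\<exists>m U r. H \<in> carrier_mat m m \<and> unitary m U \<and> (\<forall>i<m. 0 \<le> r i) \<and>
      H = U * real_diag m r * mat_adjoint U \<and> psd_pow s H = U * real_diag m (\<lambda>i. r i powr s) * mat_adjoint U"
    unfolding psd_pow_def by (rule someI_ex)
  then obtain m U r where "H \<in> carrier_mat m m" "unitary m U" "\<forall>i<m. 0 \<le> r i"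
      "H = U * real_diag m r * mat_adjoint U" "psd_pow s H = U * real_diag m (\<lambda>i. r i powr s) * mat_adjoint U"
    by blast
  moreover have "m = n" using \<open>H \<in> carrier_mat m m\<close> psd_carrier_mat[OF assms] by auto
  ultimately show ?thesis by blast
qed

lemma mtrace_psd_pow:
  assumes "psd n H"
  shows "Re (mtrace (psd_pow s H)) = (\<Sum>l\<in>#eigvals H. Re l powr s)"
proof -
  obtain U r where U: "unitary n U" and HU: "H = U * real_diag n r * mat_adjoint U"
    and R: "psd_pow s H = U * real_diag n (\<lambda>i. r i powr s) * mat_adjoint U"
    using psd_pow_spectral[OF assms] by blast
  have "eigvals H = image_mset (\<lambda>i. complex_of_real (r i)) (mset_set {..<n})"
    unfolding HU by (rule eigvals_unitary_conj[OF U])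
  then show ?thesis
    unfolding R mtrace_unitary_conj[OF U real_diag_carrier_mat] mtrace_real_diag
    by (simp add: image_mset.compositionality o_def flip: sum_unfold_sum_mset)
qed

lemma adjoint_psd_pow_half_mult:
  assumes "psd n H"
  shows "mat_adjoint (psd_pow (1 / 2) H) * psd_pow (1 / 2) H = H"
proof -
  obtain U r where U: "unitary n U" and r: "\<forall>i<n. 0 \<le> r i" and HU: "H = U * real_diag n r * mat_adjoint U"
    and R: "psd_pow (1 / 2) H = U * real_diag n (\<lambda>i. r i powr (1 / 2)) * mat_adjoint U"
    using psd_pow_spectral[OF assms] by blast
  have "mat_adjoint (psd_pow (1 / 2) H) * psd_pow (1 / 2) H =
      U * real_diag n (\<lambda>i. r i powr (1 / 2) * r i powr (1 / 2)) * mat_adjoint U"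
    unfolding R using U
    by (simp add: adjoint_unitary_conj_real_diag unitary_carrier_mat unitary_conj_real_diag_mult)
  also have "real_diag n (\<lambda>i. r i powr (1 / 2) * r i powr (1 / 2)) = real_diag n r"
    using r by (intro eq_matI) (simp_all add: powr_add[symmetric])
  finally show ?thesis unfolding HU .
qed

lemma schatten_psd_pow_half:
  assumes "psd n H"
  shows "schatten q (psd_pow (1 / 2) H) = (\<Sum>l\<in>#eigvals H. Re l powr (q / 2)) powr (1 / q)"
  unfolding schatten_def adjoint_psd_pow_half_mult[OF assms] mtrace_psd_pow[OF assms] ..

lemma psd_eigvals_nonneg: "psd n H \<Longrightarrow> l \<in># eigvals H \<Longrightarrow> 0 \<le> Re l"
  by (auto dest!: psd_eigvals)

lemma schatten_psd_pow_half_power: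
  assumes H: "psd n H" and p: "0 < p"
  shows "schatten (2 * real p) (psd_pow (1 / 2) H) ^ (2 * p) = (\<Sum>l\<in>#eigvals H. Re l ^ p)"
proof -
  define S where "S = (\<Sum>l\<in>#eigvals H. Re l ^ p)"
  have S: "0 \<le> S"
    unfolding S_def using sum_mset_mono[of "eigvals H" "\<lambda>_. 0" "\<lambda>l. Re l ^ p"] psd_eigvals_nonneg[OF H]
    by simp
  have "(\<Sum>l\<in>#eigvals H. Re l powr (2 * real p / 2)) = S"
    unfolding S_def
  proof (intro arg_cong[where f = sum_mset] image_mset_cong)
    fix l assume "l \<in># eigvals H"
    then have "0 \<le> Re l" by (rule psd_eigvals_nonneg[OF H])
    then show "Re l powr (2 * real p / 2) = Re l ^ p"
      using p by (cases "Re l = 0") (simp_all add: powr_realpow)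
  qed
  then have "schatten (2 * real p) (psd_pow (1 / 2) H) = S powr (1 / (2 * real p))"
    by (simp add: schatten_psd_pow_half[OF H])
  also have "(S powr (1 / (2 * real p))) ^ (2 * p) = S"
    using S p by (cases "S = 0") (simp_all add: powr_power)
  finally show ?thesis unfolding S_def .
qed

lemma schatten_psd_pow_half_power_le:
  assumes A: "psd k A" and B: "psd d B"
    and sums: "sum_mset (eigvals A) = sum_mset (eigvals B)"
    and le_mean: "\<forall>l\<in>#eigvals A. Re l \<le> Re (sum_mset (eigvals B)) / real d" and p: "0 < p"
  shows "schatten (2 * real p) (psd_pow (1 / 2) A) ^ (2 * p) \<le>
    schatten (2 * real p) (psd_pow (1 / 2) B) ^ (2 * p)"
proof -
  obtain a where a: "\<forall>i<k. 0 \<le> a i"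
    and eA: "eigvals A = image_mset (\<lambda>i. complex_of_real (a i)) (mset_set {..<k})"
    using psd_eigvals[OF A] by blast
  obtain b where b: "\<forall>i<d. 0 \<le> b i"
    and eB: "eigvals B = image_mset (\<lambda>i. complex_of_real (b i)) (mset_set {..<d})"
    using psd_eigvals[OF B] by blast
  have "(\<Sum>i<k. a i) = (\<Sum>i<d. b i)"
    using sums unfolding eA eB by (simp flip: sum_unfold_sum_mset of_real_sum)
  moreover have "\<forall>i<k. a i \<le> (\<Sum>i<d. b i) / real d"
    using le_mean unfolding eA eB by (simp flip: sum_unfold_sum_mset of_real_sum)
  ultimately have "(\<Sum>i<k. a i ^ p) \<le> (\<Sum>i<d. b i ^ p)"
    using a b p by (intro power_sum_le_of_le_mean) simp_all
  then show ?thesis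
    unfolding schatten_psd_pow_half_power[OF A p] schatten_psd_pow_half_power[OF B p] eA eB
    by (simp add: image_mset.compositionality o_def flip: sum_unfold_sum_mset)
qed

theorem lemma5p10:
  fixes n d N :: nat and M :: "nat \<Rightarrow> complex mat"
  assumes M: "\<forall>j<N. M j \<in> carrier_mat d (n * d)"
  defines "A \<equiv> mat_sum (n * d) (\<lambda>j. mat_adjoint (M j) * M j) N"
      and "B \<equiv> mat_sum d (\<lambda>j. M j * mat_adjoint (M j)) N"
  shows "sum_mset (eigvals A) = sum_mset (eigvals B) \<and>
         ((\<forall>l\<in>#eigvals A. Re l \<le> Re (sum_mset (eigvals B)) / real d) \<longrightarrow>
           (\<forall>p::nat. p \<ge> 2 \<longrightarrow>
              schatten (2 * real p) (psd_pow (1/2) B) ^ (2 * p)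
                \<ge> schatten (2 * real p) (psd_pow (1/2) A) ^ (2 * p)))"
proof -
  have psdA: "psd (n * d) A"
    unfolding A_def using M by (intro psd_gram_sum) (metis carrier_matD(2))
  have "psd d (mat_sum d (\<lambda>j. mat_adjoint (mat_adjoint (M j)) * mat_adjoint (M j)) N)"
    using M by (intro psd_gram_sum) (metis carrier_matD(1) dim_adjoint(2))
  then have psdB: "psd d B"
    unfolding B_def by simp
  have "mtrace A = (\<Sum>j<N. mtrace (mat_adjoint (M j) * M j))"
    unfolding A_def using M by (intro mtrace_mat_sum) (metis gram_carrier_mat carrier_matD(2))
  also have "\<dots> = (\<Sum>j<N. mtrace (M j * mat_adjoint (M j)))"
    using M by (intro sum.cong refl mtrace_comm[of _ "n * d" d]) simp_all
  also have "\<dots> = mtrace B"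
    unfolding B_def using M by (intro mtrace_mat_sum[symmetric]) (metis adjoint_carrier_mat_iff mult_carrier_mat)
  finally have sums: "sum_mset (eigvals A) = sum_mset (eigvals B)"
    by (simp add: sum_eigvals_psd[OF psdA] sum_eigvals_psd[OF psdB])
  show ?thesis
    using sums schatten_psd_pow_half_power_le[OF psdA psdB sums] by auto
qed

end
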